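(* For all real numbers $r,k$, the map $f(x)=x^2\exp(r-x)+k$, $x\in\mathbb{R}$, has negative Schwarzian derivative, i.e. \[ Sf(x)=\frac{f'''(x)}{f'(x)}-\frac{3}{2}\left(\frac{f''(x)}{f'(x)}\right)^2<0 \] for every $x\in\mathbb{R}$ with $f'(x)\neq 0$ (that is, for every $x\notin\{0,2\}$). *)

theory Defs
  imports "HOL-Analysis.Analysis"
begin

definition schwarzian :: "(real \<Rightarrow> real) \<Rightarrow> real \<Rightarrow> real" where
  "schwarzian f x =
     (deriv ^^ 3) f x / deriv f x - 3 / 2 * ((deriv ^^ 2) f x / deriv f x)^2"

end

theory Submission
  imports Defs
begin

text \<open>Every derivative of \<open>t\<^sup>2 exp (r - t) + k\<close> is a polynomial times \<open>exp (r - t)\<close>, so the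
  exponential factor cancels from the sign of the Schwarzian, leaving the polynomial
  \<open>3 q\<^sup>2 - 2 p s\<close> in the first three derivative polynomials \<open>p, q, s\<close>; it equals
  \<open>((x - 2)\<^sup>2 - 2)\<^sup>2 + 4 (x - 1)\<^sup>2 + 4\<close> and is therefore positive.\<close>

lemma schwarzian_less_0_iff:
  assumes "deriv f x \<noteq> 0"
  shows "schwarzian f x < 0 \<longleftrightarrow>
    2 * deriv f x * (deriv ^^ 3) f x < 3 * ((deriv ^^ 2) f x)\<^sup>2"
proof -
  have "schwarzian f x =
      (2 * deriv f x * (deriv ^^ 3) f x - 3 * ((deriv ^^ 2) f x)\<^sup>2) / (2 * (deriv f x)\<^sup>2)"
    using assms by (simp add: schwarzian_def field_simps power2_eq_square)
  moreover have "2 * (deriv f x)\<^sup>2 > 0"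
    using assms by simp
  ultimately show ?thesis
    by (simp add: divide_less_0_iff)
qed

lemma deriv_times_exp_minus:
  assumes "\<And>t. (p has_real_derivative p' t) (at t)"
  shows "deriv (\<lambda>t. p t * exp (r - t) + k) = (\<lambda>t. (p' t - p t) * exp (r - t))"
proof
  fix t
  have "((\<lambda>t. p t * exp (r - t) + k) has_real_derivative (p' t - p t) * exp (r - t)) (at t)"
    using assms by (auto intro!: derivative_eq_intros simp: algebra_simps)
  then show "deriv (\<lambda>t. p t * exp (r - t) + k) t = (p' t - p t) * exp (r - t)"
    by (rule DERIV_imp_deriv)
qed

lemma derivs_square_times_exp_minus:
  fixes r k :: real
  defines "f \<equiv> (\<lambda>t::real. t\<^sup>2 * exp (r - t) + k)"
  shows "deriv f = (\<lambda>t. (2 * t - t\<^sup>2) * exp (r - t))"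
    and "(deriv ^^ 2) f = (\<lambda>t. (t\<^sup>2 - 4 * t + 2) * exp (r - t))"
    and "(deriv ^^ 3) f = (\<lambda>t. (6 * t - t\<^sup>2 - 6) * exp (r - t))"
proof -
  note deriv_times_exp_minus' = deriv_times_exp_minus[where k = 0, simplified]
  show d1: "deriv f = (\<lambda>t. (2 * t - t\<^sup>2) * exp (r - t))"
    unfolding f_def
    by (subst deriv_times_exp_minus[where p' = "\<lambda>t. 2 * t"])
      (auto intro!: derivative_eq_intros)
  have d2: "deriv (deriv f) = (\<lambda>t. (t\<^sup>2 - 4 * t + 2) * exp (r - t))"
    unfolding d1 by (subst deriv_times_exp_minus'[where p' = "\<lambda>t. 2 - 2 * t"])
      (auto intro!: derivative_eq_intros simp: algebra_simps)
  then show "(deriv ^^ 2) f = (\<lambda>t. (t\<^sup>2 - 4 * t + 2) * exp (r - t))"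
    by (simp add: numeral_2_eq_2)
  have "deriv (deriv (deriv f)) = (\<lambda>t. (6 * t - t\<^sup>2 - 6) * exp (r - t))"
    unfolding d2 by (subst deriv_times_exp_minus'[where p' = "\<lambda>t. 2 * t - 4"])
      (auto intro!: derivative_eq_intros simp: algebra_simps)
  then show "(deriv ^^ 3) f = (\<lambda>t. (6 * t - t\<^sup>2 - 6) * exp (r - t))"
    by (simp add: numeral_3_eq_3)
qed

lemma square_times_exp_schwarzian_poly_pos:
  fixes x :: real
  shows "2 * (2 * x - x\<^sup>2) * (6 * x - x\<^sup>2 - 6) < 3 * (x\<^sup>2 - 4 * x + 2)\<^sup>2"
proof -
  have "3 * (x\<^sup>2 - 4 * x + 2)\<^sup>2 - 2 * (2 * x - x\<^sup>2) * (6 * x - x\<^sup>2 - 6) =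
      ((x - 2)\<^sup>2 - 2)\<^sup>2 + 4 * (x - 1)\<^sup>2 + 4"
    by (simp add: power2_eq_square algebra_simps)
  moreover have "((x - 2)\<^sup>2 - 2)\<^sup>2 + 4 * (x - 1)\<^sup>2 + 4 > 0"
    by (simp add: add_nonneg_pos)
  ultimately show ?thesis
    by linarith
qed

theorem proposition2p1:
  fixes r k x :: real
  defines "f \<equiv> (\<lambda>t::real. t^2 * exp (r - t) + k)"
  assumes "deriv f x \<noteq> 0"
  shows "schwarzian f x < 0"
proof -
  note derivs = derivs_square_times_exp_minus[of r k, folded f_def]
  define E where "E = exp (r - x)"
  have "2 * deriv f x * (deriv ^^ 3) f x = E\<^sup>2 * (2 * (2 * x - x\<^sup>2) * (6 * x - x\<^sup>2 - 6))"
    by (simp add: derivs E_def power2_eq_square mult_ac)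
  also have "\<dots> < E\<^sup>2 * (3 * (x\<^sup>2 - 4 * x + 2)\<^sup>2)"
    by (intro mult_strict_left_mono square_times_exp_schwarzian_poly_pos) (simp add: E_def)
  also have "\<dots> = 3 * ((deriv ^^ 2) f x)\<^sup>2"
    by (simp add: derivs E_def power_mult_distrib mult_ac)
  finally show ?thesis
    using schwarzian_less_0_iff[OF assms(2)] by simp
qed

end
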